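(* Under the standing assumptions below, for every $i\in P$ the sum $\sum_{r\in P,\ r<i} b_r$ is finite, where $b_r$ is the rank of the free $R$-module $M_r/D_r$.
   Context: Standing assumptions: $R$ is a principal ideal domain; $P$ is a lattice with a compatible abelian group structure ($(P,+,0)$ abelian group, $a\le b\Rightarrow a+c\le b+c$). $U_0=\{s\in P:s\ge 0\}$, $R[U_0]$ the monoid ring (finite sums $\sum c_st^s$, $c_s\in R$), graded by $\deg(ct^s)=s$. $M=\bigoplus_{a\in P}M_a$ is a $P$-graded $R[U_0]$-module (persistence module) that is graded projective, with each $M_a$ a finitely generated $R$-module. For $r\in P$, $D_r=\sum_{q<r}t^{\,r-q}M_q\subseteq M_r$ (sum of images of the structure maps from degrees $q<r$); $M_r/D_r$ is a free $R$-module and $b_r$ denotes its rank. *)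

theory Defs
  imports Main "HOL-Library.Extended_Nat"
begin

definition is_ideal :: "'r::comm_ring_1 set \<Rightarrow> bool" where
  "is_ideal I \<longleftrightarrow> 0 \<in> I \<and> (\<forall>x\<in>I. \<forall>y\<in>I. x + y \<in> I) \<and> (\<forall>r. \<forall>x\<in>I. r * x \<in> I)"

definition pid_ring :: "'r::idom itself \<Rightarrow> bool" where
  "pid_ring _ \<longleftrightarrow> (\<forall>I::'r set. is_ideal I \<longrightarrow> (\<exists>a. I = {a * x | x. True}))"

text \<open>A P-graded R[U_0]-module is given by R-submodules M a of an ambient R-module
  (scalar multiplication scale), together with the structure maps
  phi a b = multiplication by t^(b - a) : M a \<rightarrow> M b for a \<le> b.\<close>

definition persistence_module ::
  "('r::comm_ring_1 \<Rightarrow> 'm::ab_group_add \<Rightarrow> 'm) \<Rightarrow> ('p::{ordered_ab_group_add,lattice} \<Rightarrow> 'm set)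
    \<Rightarrow> ('p \<Rightarrow> 'p \<Rightarrow> 'm \<Rightarrow> 'm) \<Rightarrow> bool" where
  "persistence_module scale M phi \<longleftrightarrow>
     module scale \<and>
     (\<forall>a. module.subspace scale (M a)) \<and>
     (\<forall>a b. a \<le> b \<longrightarrow>
        (\<forall>x\<in>M a. phi a b x \<in> M b) \<and>
        (\<forall>x\<in>M a. \<forall>y\<in>M a. phi a b (x + y) = phi a b x + phi a b y) \<and>
        (\<forall>c. \<forall>x\<in>M a. phi a b (scale c x) = scale c (phi a b x))) \<and>
     (\<forall>a. \<forall>x\<in>M a. phi a a x = x) \<and>
     (\<forall>a b c. a \<le> b \<longrightarrow> b \<le> c \<longrightarrow> (\<forall>x\<in>M a. phi b c (phi a b x) = phi a c x))"

text \<open>The graded free R[U_0]-module with basis J, basis element j in degree deg j.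
  Its degree-a component consists of the finitely supported coefficient vectors
  supported on the j with deg j \<le> a (coefficient of t^(a - deg j) e_j); the
  structure maps are then inclusions.\<close>

definition free_comp :: "'j set \<Rightarrow> ('j \<Rightarrow> 'p::order) \<Rightarrow> 'p \<Rightarrow> ('j \<Rightarrow> 'r::zero) set" where
  "free_comp J deg a = {g. finite {j. g j \<noteq> 0} \<and> (\<forall>j. g j \<noteq> 0 \<longrightarrow> j \<in> J \<and> deg j \<le> a)}"

text \<open>Graded projective: a graded direct summand of a graded free module, i.e. there
  are graded (degree-preserving, R[U_0]-linear) maps iota : M \<rightarrow> F and pi : F \<rightarrow> M
  with pi \<circ> iota = id. Without loss of generality the basis is indexed by pairs
  (degree, element of M) (the canonical free cover).\<close>

definition graded_projective ::
  "('r::comm_ring_1 \<Rightarrow> 'm::ab_group_add \<Rightarrow> 'm) \<Rightarrow> ('p::{ordered_ab_group_add,lattice} \<Rightarrow> 'm set)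
    \<Rightarrow> ('p \<Rightarrow> 'p \<Rightarrow> 'm \<Rightarrow> 'm) \<Rightarrow> bool" where
  "graded_projective scale M phi \<longleftrightarrow>
    (\<exists>(J::('p \<times> 'm) set) (deg::'p \<times> 'm \<Rightarrow> 'p)
       (iota::'p \<Rightarrow> 'm \<Rightarrow> ('p \<times> 'm \<Rightarrow> 'r)) (pi::'p \<Rightarrow> ('p \<times> 'm \<Rightarrow> 'r) \<Rightarrow> 'm).
      (\<forall>a. (\<forall>x\<in>M a. iota a x \<in> free_comp J deg a) \<and>
           (\<forall>x\<in>M a. \<forall>y\<in>M a. iota a (x + y) = (\<lambda>j. iota a x j + iota a y j)) \<and>
           (\<forall>c. \<forall>x\<in>M a. iota a (scale c x) = (\<lambda>j. c * iota a x j)) \<and>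
           (\<forall>g\<in>free_comp J deg a. pi a g \<in> M a) \<and>
           (\<forall>g\<in>free_comp J deg a. \<forall>h\<in>free_comp J deg a. pi a (\<lambda>j. g j + h j) = pi a g + pi a h) \<and>
           (\<forall>c. \<forall>g\<in>free_comp J deg a. pi a (\<lambda>j. c * g j) = scale c (pi a g)) \<and>
           (\<forall>x\<in>M a. pi a (iota a x) = x)) \<and>
      (\<forall>a b. a \<le> b \<longrightarrow>
           (\<forall>x\<in>M a. iota b (phi a b x) = iota a x) \<and>
           (\<forall>g\<in>free_comp J deg a. pi b g = phi a b (pi a g))))"

definition fin_gen :: "('r::comm_ring_1 \<Rightarrow> 'm::ab_group_add \<Rightarrow> 'm) \<Rightarrow> 'm set \<Rightarrow> bool" where
  "fin_gen scale N \<longleftrightarrow> (\<exists>S. finite S \<and> S \<subseteq> N \<and> module.span scale S = N)"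

definition Dsub :: "('r::comm_ring_1 \<Rightarrow> 'm::ab_group_add \<Rightarrow> 'm) \<Rightarrow> ('p::order \<Rightarrow> 'm set)
    \<Rightarrow> ('p \<Rightarrow> 'p \<Rightarrow> 'm \<Rightarrow> 'm) \<Rightarrow> 'p \<Rightarrow> 'm set" where
  "Dsub scale M phi r = module.span scale (\<Union>q\<in>{q. q < r}. phi q r ` M q)"

text \<open>B \<subseteq> N maps to a basis of the quotient module N / D (elements of N represent
  cosets): the images generate N / D, and are linearly independent modulo D.\<close>

definition quot_basis :: "('r::comm_ring_1 \<Rightarrow> 'm::ab_group_add \<Rightarrow> 'm) \<Rightarrow> 'm set \<Rightarrow> 'm set \<Rightarrow> 'm set \<Rightarrow> bool" where
  "quot_basis scale N D B \<longleftrightarrow>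
     B \<subseteq> N \<and> N \<subseteq> module.span scale (D \<union> B) \<and>
     (\<forall>F c. finite F \<longrightarrow> F \<subseteq> B \<longrightarrow> (\<Sum>b\<in>F. scale (c b) b) \<in> D \<longrightarrow> (\<forall>b\<in>F. c b = 0))"

definition quot_free :: "('r::comm_ring_1 \<Rightarrow> 'm::ab_group_add \<Rightarrow> 'm) \<Rightarrow> 'm set \<Rightarrow> 'm set \<Rightarrow> bool" where
  "quot_free scale N D \<longleftrightarrow> (\<exists>B. quot_basis scale N D B)"

definition quot_rank :: "('r::comm_ring_1 \<Rightarrow> 'm::ab_group_add \<Rightarrow> 'm) \<Rightarrow> 'm set \<Rightarrow> 'm set \<Rightarrow> enat" where
  "quot_rank scale N D = (let B = (SOME B. quot_basis scale N D B) in
      if finite B then enat (card B) else \<infinity>)"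

definition bnum :: "('r::comm_ring_1 \<Rightarrow> 'm::ab_group_add \<Rightarrow> 'm) \<Rightarrow> ('p::order \<Rightarrow> 'm set)
    \<Rightarrow> ('p \<Rightarrow> 'p \<Rightarrow> 'm \<Rightarrow> 'm) \<Rightarrow> 'p \<Rightarrow> enat" where
  "bnum scale M phi r = quot_rank scale (M r) (Dsub scale M phi r)"

end

theory Submission
  imports Defs
begin

text \<open>Push the bases \<open>B\<^sub>r\<close> of \<open>M\<^sub>r / D\<^sub>r\<close>, \<open>r < i\<close>, forward to degree \<open>i\<close> along the structure
  maps. The resulting family is linearly independent in \<open>M\<^sub>i\<close>: in a vanishing combination
  look at a maximal degree \<open>r\<^sub>0\<close> that occurs. Embedding into the graded free module, the
  coordinates of degree exactly \<open>r\<^sub>0\<close> only receive contributions from the degree-\<open>r\<^sub>0\<close> terms,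
  so their combination in \<open>M\<^sub>r\<^sub>0\<close> has coordinates in degrees \<open>< r\<^sub>0\<close> only and therefore lies in
  \<open>D\<^sub>r\<^sub>0\<close>; independence modulo \<open>D\<^sub>r\<^sub>0\<close> kills those coefficients. Over a domain, an independent
  family in the span of finitely many generators is finite, so only finitely many \<open>B\<^sub>r\<close> are
  nonempty and all of them are finite.\<close>

lemma (in module) sum_scale_eliminate:
  assumes "finite I" and "k1 \<notin> I"
  shows "(\<Sum>k\<in>insert k1 I. scale (if k = k1 then - (\<Sum>k\<in>I. d k * al k) else d k * al k1) (f k)) =
    (\<Sum>k\<in>I. scale (d k) (scale (al k1) (f k) - scale (al k) (f k1)))"
proof -
  have "(\<Sum>k\<in>I. scale (if k = k1 then - (\<Sum>k\<in>I. d k * al k) else d k * al k1) (f k)) =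
      (\<Sum>k\<in>I. scale (d k * al k1) (f k))"
    using assms(2) by (intro sum.cong) auto
  then show ?thesis
    using assms by (simp add: scale_sum_left scale_right_diff_distrib sum_subtractf mult.commute)
qed

lemma module_dependent_if_card_gt_spanning:
  fixes scale :: "'r::idom \<Rightarrow> 'm::ab_group_add \<Rightarrow> 'm" and f :: "'i \<Rightarrow> 'm"
  assumes "module scale" and "finite S" and "finite I" and "card S < card I"
    and "f ` I \<subseteq> module.span scale S"
  shows "\<exists>c. (\<Sum>k\<in>I. scale (c k) (f k)) = 0 \<and> (\<exists>k\<in>I. c k \<noteq> 0)"
proof -
  interpret module scale by (rule assms(1))
  show ?thesis using assms(2-5)
  proof (induction S arbitrary: I f rule: finite_induct)
    case empty
    from empty obtain k where "k \<in> I" by fastforce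
    moreover have "\<forall>k\<in>I. f k = 0" using empty by auto
    ultimately show ?case by (intro exI[of _ "\<lambda>_. 1"]) auto
  next
    case (insert a S I f)
    have "\<forall>k\<in>I. \<exists>al. f k - scale al a \<in> span S"
      using insert.prems(3) span_breakdown_eq by blast
    then obtain al where al: "\<And>k. k \<in> I \<Longrightarrow> f k - scale (al k) a \<in> span S" by metis
    have card_I: "Suc (card S) < card I" using insert.hyps insert.prems(2) by simp
    show ?case
    proof (cases "\<forall>k\<in>I. al k = 0")
      case True
      then have "f ` I \<subseteq> span S" using al by force
      moreover have "card S < card I" using card_I by simp
      ultimately show ?thesis using insert.IH[OF insert.prems(1)] by blast
    next
      case False
      then obtain k1 where k1: "k1 \<in> I" "al k1 \<noteq> 0" by blast
      define I' where "I' = I - {k1}"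
      have I: "I = insert k1 I'" "k1 \<notin> I'" "finite I'" using k1 insert.prems(1) by (auto simp: I'_def)
      \<comment> \<open>eliminate \<open>a\<close> against \<open>f k1\<close>; as \<open>al k1 \<noteq> 0\<close> in a domain, a nontrivial relation
        among the \<open>g k\<close> gives one among the \<open>f k\<close>\<close>
      define g where "g k = scale (al k1) (f k) - scale (al k) (f k1)" for k
      have "g ` I' \<subseteq> span S"
      proof (rule image_subsetI)
        fix k assume "k \<in> I'"
        have "g k = scale (al k1) (f k - scale (al k) a) - scale (al k) (f k1 - scale (al k1) a)"
          by (simp add: g_def algebra_simps mult.commute)
        then show "g k \<in> span S" using al k1(1) \<open>k \<in> I'\<close> I(1) by (simp add: span_diff span_scale)
      qed
      moreover have "card S < card I'" using card_I I by simp
      ultimately obtain d where d: "(\<Sum>k\<in>I'. scale (d k) (g k)) = 0" "\<exists>k\<in>I'. d k \<noteq> 0"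
        using insert.IH[OF I(3)] by blast
      define c where "c k = (if k = k1 then - (\<Sum>k\<in>I'. d k * al k) else d k * al k1)" for k
      have "(\<Sum>k\<in>I. scale (c k) (f k)) = 0"
        using sum_scale_eliminate[OF I(3,2), of d al f] d(1) I(1) by (simp add: c_def g_def)
      moreover have "\<exists>k\<in>I. c k \<noteq> 0" using d(2) k1(2) I by (auto simp: c_def)
      ultimately show ?thesis by blast
    qed
  qed
qed

lemma module_independent_family_finite:
  fixes scale :: "'r::idom \<Rightarrow> 'm::ab_group_add \<Rightarrow> 'm" and f :: "'i \<Rightarrow> 'm"
  assumes "module scale" and "finite S" and "f ` I \<subseteq> module.span scale S"
    and independent: "\<And>F c. finite F \<Longrightarrow> F \<subseteq> I \<Longrightarrow> (\<Sum>k\<in>F. scale (c k) (f k)) = 0 \<Longrightarrow> \<forall>k\<in>F. c k = 0"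
  shows "finite I"
proof (rule ccontr)
  assume "infinite I"
  then obtain F where F: "F \<subseteq> I" "finite F" "card F = Suc (card S)"
    using infinite_arbitrarily_large by blast
  then obtain c where "(\<Sum>k\<in>F. scale (c k) (f k)) = 0" "\<exists>k\<in>F. c k \<noteq> 0"
    using module_dependent_if_card_gt_spanning[OF assms(1,2) F(2)] assms(3) by force
  then show False using independent F by blast
qed

lemma finite_SigmaD:
  assumes "finite (Sigma A B)"
  shows "finite {a \<in> A. B a \<noteq> {}}" and "a \<in> A \<Longrightarrow> finite (B a)"
proof -
  have "{a \<in> A. B a \<noteq> {}} = fst ` Sigma A B" by force
  then show "finite {a \<in> A. B a \<noteq> {}}" using assms by simp
  assume "a \<in> A"
  then have "Sigma {a} B \<subseteq> Sigma A B" by auto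
  moreover have "B a = snd ` Sigma {a} B" by force
  ultimately show "finite (B a)" using assms by (metis finite_imageI finite_subset)
qed

lemma quot_basis_subset: "quot_basis scale N D B \<Longrightarrow> B \<subseteq> N"
  by (simp add: quot_basis_def)

lemma quot_basis_independent:
  "quot_basis scale N D B \<Longrightarrow> finite F \<Longrightarrow> F \<subseteq> B \<Longrightarrow> (\<Sum>b\<in>F. scale (c b) b) \<in> D \<Longrightarrow>
    b \<in> F \<Longrightarrow> c b = 0"
  by (simp add: quot_basis_def)

text \<open>The splitting \<open>M \<rightarrow> F \<rightarrow> M\<close> of \<^const>\<open>graded_projective\<close>, over an arbitrary basis
  type, keeping only the properties the argument needs.\<close>

locale graded_summand = module scale
  for scale :: "'r::comm_ring_1 \<Rightarrow> 'm::ab_group_add \<Rightarrow> 'm" +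
  fixes M :: "'p::order \<Rightarrow> 'm set"
    and phi :: "'p \<Rightarrow> 'p \<Rightarrow> 'm \<Rightarrow> 'm"
    and J :: "'j set" and deg :: "'j \<Rightarrow> 'p"
    and iota :: "'p \<Rightarrow> 'm \<Rightarrow> 'j \<Rightarrow> 'r" and pi :: "'p \<Rightarrow> ('j \<Rightarrow> 'r) \<Rightarrow> 'm"
  assumes subspace_M: "subspace (M a)"
    and phi_mem: "a \<le> b \<Longrightarrow> x \<in> M a \<Longrightarrow> phi a b x \<in> M b"
    and iota_mem: "x \<in> M a \<Longrightarrow> iota a x \<in> free_comp J deg a"
    and iota_add: "x \<in> M a \<Longrightarrow> y \<in> M a \<Longrightarrow> iota a (x + y) = (\<lambda>j. iota a x j + iota a y j)"
    and iota_scale: "x \<in> M a \<Longrightarrow> iota a (scale c x) = (\<lambda>j. c * iota a x j)"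
    and pi_mem: "g \<in> free_comp J deg a \<Longrightarrow> pi a g \<in> M a"
    and pi_add: "g \<in> free_comp J deg a \<Longrightarrow> h \<in> free_comp J deg a \<Longrightarrow>
      pi a (\<lambda>j. g j + h j) = pi a g + pi a h"
    and pi_iota: "x \<in> M a \<Longrightarrow> pi a (iota a x) = x"
    and iota_phi: "a \<le> b \<Longrightarrow> x \<in> M a \<Longrightarrow> iota b (phi a b x) = iota a x"
    and pi_phi: "a \<le> b \<Longrightarrow> g \<in> free_comp J deg a \<Longrightarrow> pi b g = phi a b (pi a g)"

lemma graded_projective_imp_graded_summand:
  fixes scale :: "'r::comm_ring_1 \<Rightarrow> 'm::ab_group_add \<Rightarrow> 'm"
    and M :: "'p::{ordered_ab_group_add,lattice} \<Rightarrow> 'm set"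
  assumes "persistence_module scale M phi" and "graded_projective scale M phi"
  obtains J :: "('p \<times> 'm) set" and deg iota pi where "graded_summand scale M phi J deg iota pi"
proof -
  obtain J :: "('p \<times> 'm) set" and deg iota pi where
    comp: "\<forall>a. (\<forall>x\<in>M a. iota a x \<in> free_comp J deg a) \<and>
           (\<forall>x\<in>M a. \<forall>y\<in>M a. iota a (x + y) = (\<lambda>j. iota a x j + iota a y j)) \<and>
           (\<forall>c. \<forall>x\<in>M a. iota a (scale c x) = (\<lambda>j. c * iota a x j)) \<and>
           (\<forall>g\<in>free_comp J deg a. pi a g \<in> M a) \<and>
           (\<forall>g\<in>free_comp J deg a. \<forall>h\<in>free_comp J deg a. pi a (\<lambda>j. g j + h j) = pi a g + pi a h) \<and>
           (\<forall>c. \<forall>g\<in>free_comp J deg a. pi a (\<lambda>j. c * g j) = scale c (pi a g)) \<and>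
           (\<forall>x\<in>M a. pi a (iota a x) = x)"
    and maps: "\<forall>a b. a \<le> b \<longrightarrow>
           (\<forall>x\<in>M a. iota b (phi a b x) = iota a x) \<and>
           (\<forall>g\<in>free_comp J deg a. pi b g = phi a b (pi a g))"
    using assms(2) unfolding graded_projective_def by (elim exE conjE) (rule that; assumption)
  have pm: "module scale \<and> (\<forall>a. module.subspace scale (M a)) \<and>
      (\<forall>a b. a \<le> b \<longrightarrow> (\<forall>x\<in>M a. phi a b x \<in> M b))"
    using assms(1) unfolding persistence_module_def by simp
  show thesis
    by (intro that[of J deg iota pi] graded_summand.intro graded_summand_axioms.intro)
      (simp_all add: pm comp maps)
qed

context graded_summand
begin

lemma zero_mem_free_comp: "(\<lambda>_. 0) \<in> free_comp J deg a"
  by (simp add: free_comp_def)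

lemma deg_le_if_iota_nonzero: "x \<in> M a \<Longrightarrow> iota a x j \<noteq> 0 \<Longrightarrow> deg j \<le> a"
  using iota_mem by (auto simp: free_comp_def)

lemma iota_zero: "iota a 0 = (\<lambda>_. 0)"
  using iota_add[OF subspace_0 subspace_0, OF subspace_M subspace_M, of a]
  by (simp add: fun_eq_iff)

lemma pi_zero: "pi a (\<lambda>_. 0) = 0"
  using pi_add[OF zero_mem_free_comp zero_mem_free_comp, of a] by simp

lemma iota_sum:
  assumes "finite F" and "\<And>p. p \<in> F \<Longrightarrow> x p \<in> M a"
  shows "iota a (\<Sum>p\<in>F. scale (c p) (x p)) = (\<lambda>j. \<Sum>p\<in>F. c p * iota a (x p) j)"
  using assms
proof (induction F rule: finite_induct)
  case empty
  then show ?case by (simp add: iota_zero)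
next
  case (insert q F)
  have "(\<Sum>p\<in>F. scale (c p) (x p)) \<in> M a" "scale (c q) (x q) \<in> M a"
    using insert.prems by (auto intro!: subspace_sum subspace_scale subspace_M)
  then show ?case using insert by (simp add: iota_add iota_scale fun_eq_iff)
qed

lemma pi_single_mem_Dsub:
  assumes "j0 \<in> J" and "deg j0 < r"
  shows "pi r (\<lambda>j. if j = j0 then c else 0) \<in> Dsub scale M phi r"
proof -
  have single: "(\<lambda>j. if j = j0 then c else 0) \<in> free_comp J deg (deg j0)"
    using assms(1) by (auto simp: free_comp_def)
  then have "pi r (\<lambda>j. if j = j0 then c else 0) = phi (deg j0) r (pi (deg j0) (\<lambda>j. if j = j0 then c else 0))"
    using pi_phi assms(2) by simp
  then show ?thesis using pi_mem[OF single] assms(2) by (auto simp: Dsub_def intro!: span_base)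
qed

lemma pi_mem_Dsub:
  assumes "h \<in> free_comp J deg r" and "\<And>j. h j \<noteq> 0 \<Longrightarrow> deg j < r"
  shows "pi r h \<in> Dsub scale M phi r"
proof -
  have "finite {j. h j \<noteq> 0}" using assms(1) by (simp add: free_comp_def)
  then obtain T where "finite T" and "{j. h j \<noteq> 0} \<subseteq> T" by blast
  then show ?thesis using assms
  proof (induction T arbitrary: h rule: finite_induct)
    case empty
    then have "h = (\<lambda>_. 0)" by auto
    then show ?case by (simp add: pi_zero Dsub_def span_zero)
  next
    case (insert j0 T h)
    show ?case
    proof (cases "h j0 = 0")
      case True
      then have "{j. h j \<noteq> 0} \<subseteq> T" using insert.prems(1) by auto
      then show ?thesis using insert.IH insert.prems(2,3) by blast
    next
      case False
      define h1 where "h1 = (\<lambda>j. if j = j0 then h j0 else 0)"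
      define h2 where "h2 = (\<lambda>j. if j = j0 then 0 else h j)"
      have h: "h = (\<lambda>j. h1 j + h2 j)" by (auto simp: h1_def h2_def)
      have h1: "h1 \<in> free_comp J deg r" and h2: "h2 \<in> free_comp J deg r"
        using insert.prems(2) by (auto simp: free_comp_def h1_def h2_def elim: rev_finite_subset)
      have "pi r h1 \<in> Dsub scale M phi r"
        using False insert.prems(2,3) pi_single_mem_Dsub[of j0 r "h j0"]
        by (auto simp: free_comp_def h1_def)
      moreover have "pi r h2 \<in> Dsub scale M phi r"
      proof (rule insert.IH[OF _ h2])
        show "{j. h2 j \<noteq> 0} \<subseteq> T" using insert.prems(1) by (auto simp: h2_def)
        show "deg j < r" if "h2 j \<noteq> 0" for j
          using that insert.prems(3) by (auto simp: h2_def split: if_splits)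
      qed
      ultimately show ?thesis
        unfolding h pi_add[OF h1 h2] by (simp add: Dsub_def span_add)
    qed
  qed
qed

lemma mem_Dsub_if_low_support:
  assumes "x \<in> M r" and "\<And>j. iota r x j \<noteq> 0 \<Longrightarrow> deg j < r"
  shows "x \<in> Dsub scale M phi r"
  using pi_mem_Dsub[OF iota_mem[OF assms(1)] assms(2)] pi_iota[OF assms(1)] by simp

lemma iota_sum_phi:
  assumes "finite F" and "\<And>p. p \<in> F \<Longrightarrow> fst p \<le> i \<and> snd p \<in> M (fst p)"
  shows "iota i (\<Sum>p\<in>F. scale (c p) (phi (fst p) i (snd p))) = (\<lambda>j. \<Sum>p\<in>F. c p * iota (fst p) (snd p) j)"
  using iota_sum[OF assms(1), of "\<lambda>p. phi (fst p) i (snd p)" i c] assms(2) phi_mem iota_phi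
  by simp

lemma top_degree_coordinate_zero:
  assumes "finite F" and mem: "\<And>p. p \<in> F \<Longrightarrow> fst p \<le> i \<and> snd p \<in> M (fst p)"
    and zero: "(\<Sum>p\<in>F. scale (c p) (phi (fst p) i (snd p))) = 0"
    and r0_max: "\<And>p. p \<in> F \<Longrightarrow> r0 \<le> fst p \<Longrightarrow> fst p = r0"
    and deg_j: "deg j = r0"
  shows "(\<Sum>p\<in>{p \<in> F. fst p = r0}. c p * iota (fst p) (snd p) j) = 0"
proof -
  have "(\<Sum>p\<in>{p \<in> F. fst p = r0}. c p * iota (fst p) (snd p) j) =
      (\<Sum>p\<in>F. c p * iota (fst p) (snd p) j)"
  proof (rule sum.mono_neutral_left[OF \<open>finite F\<close>])
    show "\<forall>p\<in>F - {p \<in> F. fst p = r0}. c p * iota (fst p) (snd p) j = 0"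
    proof
      fix p assume p: "p \<in> F - {p \<in> F. fst p = r0}"
      have "iota (fst p) (snd p) j = 0"
      proof (rule ccontr)
        assume "iota (fst p) (snd p) j \<noteq> 0"
        then have "r0 \<le> fst p" using deg_le_if_iota_nonzero mem p deg_j by blast
        then show False using r0_max p by blast
      qed
      then show "c p * iota (fst p) (snd p) j = 0" by simp
    qed
  qed auto
  also have "\<dots> = 0"
    using arg_cong[OF zero, of "\<lambda>y. iota i y j"] iota_sum_phi[OF \<open>finite F\<close> mem] iota_zero by simp
  finally show ?thesis .
qed

lemma quot_basis_top_degree_coeffs_zero:
  assumes B: "\<And>r. quot_basis scale (M r) (Dsub scale M phi r) (B r)"
    and F: "finite F" "F \<subseteq> Sigma {r. r \<le> i} B"
    and zero: "(\<Sum>p\<in>F. scale (c p) (phi (fst p) i (snd p))) = 0"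
    and r0_max: "\<And>p. p \<in> F \<Longrightarrow> r0 \<le> fst p \<Longrightarrow> fst p = r0"
  shows "(r0, b) \<in> F \<Longrightarrow> c (r0, b) = 0"
proof -
  have mem: "fst p \<le> i \<and> snd p \<in> M (fst p)" if "p \<in> F" for p
  proof -
    have "fst p \<le> i" "snd p \<in> B (fst p)" using that F(2) by auto
    then show ?thesis using quot_basis_subset[OF B] by blast
  qed
  define F0 where "F0 = {b. (r0, b) \<in> F}"
  have "F0 \<subseteq> snd ` F" by (force simp: F0_def)
  then have F0: "finite F0" "F0 \<subseteq> B r0"
    using F by (auto simp: F0_def intro: finite_subset)
  define x where "x = (\<Sum>b\<in>F0. scale (c (r0, b)) b)"
  have F0M: "b \<in> M r0" if "b \<in> F0" for b
    using that mem[of "(r0, b)"] by (simp add: F0_def)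
  then have xM: "x \<in> M r0"
    unfolding x_def by (intro subspace_sum subspace_scale subspace_M)
  have "x \<in> Dsub scale M phi r0"
  proof (rule mem_Dsub_if_low_support[OF xM])
    fix j assume nz: "iota r0 x j \<noteq> 0"
    have "deg j \<noteq> r0"
    proof
      assume deg_j: "deg j = r0"
      have "iota r0 x j = (\<Sum>b\<in>F0. c (r0, b) * iota r0 b j)"
        unfolding x_def using iota_sum[OF F0(1) F0M] by simp
      also have "\<dots> = (\<Sum>p\<in>{p \<in> F. fst p = r0}. c p * iota (fst p) (snd p) j)"
      proof (rule sum.reindex_cong[of "Pair r0", symmetric])
        show "{p \<in> F. fst p = r0} = Pair r0 ` F0" by (force simp: F0_def)
      qed (auto simp: inj_on_def)
      also have "\<dots> = 0"
        by (rule top_degree_coordinate_zero[OF F(1) mem zero r0_max deg_j])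
      finally show False using nz by contradiction
    qed
    then show "deg j < r0" using deg_le_if_iota_nonzero[OF xM nz] by simp
  qed
  then show "(r0, b) \<in> F \<Longrightarrow> c (r0, b) = 0"
    using quot_basis_independent[OF B F0] by (simp add: x_def F0_def)
qed

lemma quot_bases_transport_independent:
  assumes B: "\<And>r. quot_basis scale (M r) (Dsub scale M phi r) (B r)"
    and "finite F" and "F \<subseteq> Sigma {r. r \<le> i} B"
    and "(\<Sum>p\<in>F. scale (c p) (phi (fst p) i (snd p))) = 0"
  shows "\<forall>p\<in>F. c p = 0"
  using assms(2-4)
proof (induction F rule: finite_psubset_induct)
  case (psubset F)
  show ?case
  proof (cases "F = {}")
    case False
    then have "finite (fst ` F)" "fst ` F \<noteq> {}" using psubset.hyps by auto
    then obtain r0 where r0: "r0 \<in> fst ` F" and max: "\<forall>r\<in>fst ` F. r0 \<le> r \<longrightarrow> r0 = r"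
      by (meson finite_has_maximal)
    have r0_max: "fst p = r0" if "p \<in> F" "r0 \<le> fst p" for p
      using max that by force
    have top: "c p = 0" if "p \<in> F" "fst p = r0" for p
    proof -
      have "(r0, snd p) = p" using that(2) by auto
      then show ?thesis
        using quot_basis_top_degree_coeffs_zero[OF B psubset.hyps psubset.prems r0_max, of "snd p"] that(1)
        by simp
    qed
    define F' where "F' = {p \<in> F. fst p \<noteq> r0}"
    have "F' \<subset> F" using r0 by (auto simp: F'_def)
    have "(\<Sum>p\<in>F. scale (c p) (phi (fst p) i (snd p))) =
        (\<Sum>p\<in>F'. scale (c p) (phi (fst p) i (snd p)))"
    proof (rule sum.mono_neutral_right[OF psubset.hyps])
      show "F' \<subseteq> F" by (simp add: F'_def)
      show "\<forall>p\<in>F - F'. scale (c p) (phi (fst p) i (snd p)) = 0"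
        using top by (simp add: F'_def)
    qed
    then have "\<forall>p\<in>F'. c p = 0"
      using psubset.IH[OF \<open>F' \<subset> F\<close>] psubset.prems \<open>F' \<subset> F\<close> by simp
    then show ?thesis using top unfolding F'_def by blast
  qed simp
qed

end

lemma finite_transported_quot_bases:
  fixes scale :: "'r::idom \<Rightarrow> 'm::ab_group_add \<Rightarrow> 'm"
    and pi :: "'p::order \<Rightarrow> ('j \<Rightarrow> 'r) \<Rightarrow> 'm"
  assumes "graded_summand scale M phi J deg iota pi" and "fin_gen scale (M i)"
    and B: "\<And>r. quot_basis scale (M r) (Dsub scale M phi r) (B r)"
  shows "finite (Sigma {r. r \<le> i} B)"
proof -
  interpret graded_summand scale M phi J deg iota pi by (rule assms(1))
  obtain S where "finite S" and span_S: "span S = M i"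
    using assms(2) unfolding fin_gen_def by blast
  have "(\<lambda>p. phi (fst p) i (snd p)) ` Sigma {r. r \<le> i} B \<subseteq> span S"
  proof (rule image_subsetI)
    fix p assume "p \<in> Sigma {r. r \<le> i} B"
    then have "fst p \<le> i" "snd p \<in> B (fst p)" by auto
    then have "fst p \<le> i" "snd p \<in> M (fst p)" using quot_basis_subset[OF B, of "fst p"] by auto
    then show "phi (fst p) i (snd p) \<in> span S" unfolding span_S by (rule phi_mem)
  qed
  then show ?thesis
  proof (rule module_independent_family_finite[OF module_axioms \<open>finite S\<close>])
    fix F c
    assume "finite F" "F \<subseteq> Sigma {r. r \<le> i} B"
      "(\<Sum>p\<in>F. scale (c p) (phi (fst p) i (snd p))) = 0"
    then show "\<forall>p\<in>F. c p = 0" by (rule quot_bases_transport_independent[OF B])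
  qed
qed

theorem theorem3p18:
  fixes scale :: "'r::idom \<Rightarrow> 'm::ab_group_add \<Rightarrow> 'm"
    and M :: "'p::{ordered_ab_group_add,lattice} \<Rightarrow> 'm set"
    and phi :: "'p \<Rightarrow> 'p \<Rightarrow> 'm \<Rightarrow> 'm"
    and i :: 'p
  assumes "pid_ring TYPE('r)"
    and "persistence_module scale M phi"
    and "graded_projective scale M phi"
    and "\<forall>a. fin_gen scale (M a)"
    and "\<forall>r. quot_free scale (M r) (Dsub scale M phi r)"
  shows "finite {r. r < i \<and> bnum scale M phi r \<noteq> 0} \<and> (\<forall>r. r < i \<longrightarrow> bnum scale M phi r \<noteq> \<infinity>)"
proof -
  obtain J :: "('p \<times> 'm) set" and deg iota pi where summand: "graded_summand scale M phi J deg iota pi"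
    using graded_projective_imp_graded_summand[OF assms(2,3)] by blast
  define B where "B r = (SOME B. quot_basis scale (M r) (Dsub scale M phi r) B)" for r
  have B: "quot_basis scale (M r) (Dsub scale M phi r) (B r)" for r
    using assms(5) someI_ex unfolding quot_free_def B_def by metis
  have bnum: "bnum scale M phi r = (if finite (B r) then enat (card (B r)) else \<infinity>)" for r
    by (simp add: bnum_def quot_rank_def B_def Let_def)
  have fin: "finite (Sigma {r. r \<le> i} B)"
    using finite_transported_quot_bases[OF summand _ B] assms(4) by blast
  have "{r. r < i \<and> bnum scale M phi r \<noteq> 0} \<subseteq> {r \<in> {r. r \<le> i}. B r \<noteq> {}}"
    by (auto simp: bnum zero_enat_def)
  then have "finite {r. r < i \<and> bnum scale M phi r \<noteq> 0}"
    using finite_SigmaD(1)[OF fin] finite_subset by blast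
  moreover have "\<forall>r. r < i \<longrightarrow> bnum scale M phi r \<noteq> \<infinity>"
    using finite_SigmaD(2)[OF fin] by (simp add: bnum)
  ultimately show ?thesis by blast
qed

end
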